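(* Suppose $\mu>1$. Then for every environment $i\in S$ there exists $m\ge1$ such that the total state $m.i$ is viable.
   Context: Let $S$ be a finite set and $P$ the transition matrix of an irreducible Markov chain on $S$ with stationary distribution $\pi$. For each $i\in S$ let $(R_{in})_{n\in\mathbb{N}}$ be a probability distribution on $\mathbb{N}$ with mean $\mu_i\le\infty$, and $\mu=\sum_i\pi_i\mu_i$. Let $(\xi_t^i)_{t\ge1,i\in S}$ be independent with $\mathbb{P}(\xi_t^i=n)=R_{in}$, let $(Q_t)_{t\ge0}$ be a Markov chain with transition matrix $P$ independent of the $\xi$'s, and $\xi_t=\sum_{i}\xi_t^i\mathbf{1}\{Q_t=i\}$. The $\mathbb{Z}$-valued process is $Y_{t+1}=Y_t-1+\xi_{t+1}$; $\mathbb{P}_{m.i}$ is its law started from $Y_0=m$, $Q_0=i$. Let $\tau=\inf\{t\ge1:Q_t=i\}$. The total state $m.i$ is viable if $\mathbb{P}_{m.i}(Y_\tau-Y_0\ge1\text{ and }Y_t\ge1\text{ for all }t\in[0,\tau])>0$. *)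

theory Defs
  imports "HOL-Analysis.Analysis"
begin

definition stochastic_matrix :: "('a::finite \<Rightarrow> 'a \<Rightarrow> real) \<Rightarrow> bool" where
  "stochastic_matrix P \<longleftrightarrow> (\<forall>i j. P i j \<ge> 0) \<and> (\<forall>i. (\<Sum>j\<in>UNIV. P i j) = 1)"

definition irreducible_matrix :: "('a::finite \<Rightarrow> 'a \<Rightarrow> real) \<Rightarrow> bool" where
  "irreducible_matrix P \<longleftrightarrow> (\<forall>i j. (i, j) \<in> {(a, b). P a b > 0}\<^sup>+)"

definition stationary_distribution :: "('a::finite \<Rightarrow> 'a \<Rightarrow> real) \<Rightarrow> ('a \<Rightarrow> real) \<Rightarrow> bool" where
  "stationary_distribution P \<pi> \<longleftrightarrow> (\<forall>i. \<pi> i \<ge> 0) \<and> (\<Sum>i\<in>UNIV. \<pi> i) = 1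
     \<and> (\<forall>j. (\<Sum>i\<in>UNIV. \<pi> i * P i j) = \<pi> j)"

definition prob_dist_nat :: "(nat \<Rightarrow> real) \<Rightarrow> bool" where
  "prob_dist_nat r \<longleftrightarrow> (\<forall>n. r n \<ge> 0) \<and> r sums 1"

definition mean_nat :: "(nat \<Rightarrow> real) \<Rightarrow> ennreal" where
  "mean_nat r = (\<Sum>n. ennreal (real n * r n))"

text \<open>A finite trajectory after time 0 is a list xs whose (t-1)-th entry is (Q_t, xi_t), t = 1..length xs.
  Its probability, given Q_0 = q, is the product of P(Q_{t-1},Q_t) * R_{Q_t}(xi_t)
  (the xi_t^j are independent and independent of Q).\<close>
fun path_weight :: "('a \<Rightarrow> 'a \<Rightarrow> real) \<Rightarrow> ('a \<Rightarrow> nat \<Rightarrow> real) \<Rightarrow> 'a \<Rightarrow> ('a \<times> nat) list \<Rightarrow> real" where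
  "path_weight P R q [] = 1"
| "path_weight P R q ((s, n) # xs) = P q s * R s n * path_weight P R s xs"

definition walk :: "int \<Rightarrow> ('a \<times> nat) list \<Rightarrow> nat \<Rightarrow> int" where
  "walk m xs t = m + (\<Sum>s<t. int (snd (xs ! s)) - 1)"

text \<open>The trajectory up to the return time tau = length xs (first t>=1 with Q_t = i)
  realises the event {Y_tau - Y_0 >= 1 and Y_t >= 1 for all t in [0,tau]}.\<close>
definition viable_event :: "'a \<Rightarrow> int \<Rightarrow> ('a \<times> nat) list \<Rightarrow> bool" where
  "viable_event i m xs \<longleftrightarrow> xs \<noteq> [] \<and> fst (last xs) = i
     \<and> (\<forall>j < length xs - 1. fst (xs ! j) \<noteq> i)
     \<and> (\<forall>t \<le> length xs. walk m xs t \<ge> 1)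
     \<and> walk m xs (length xs) - walk m xs 0 \<ge> 1"

text \<open>P_{m.i}(Y_tau - Y_0 >= 1 and Y_t >= 1 for t in [0,tau]): the event is the disjoint
  union over the (countably many) trajectories up to tau realising it.\<close>
definition viable_prob :: "('a \<Rightarrow> 'a \<Rightarrow> real) \<Rightarrow> ('a \<Rightarrow> nat \<Rightarrow> real) \<Rightarrow> int \<Rightarrow> 'a \<Rightarrow> ennreal" where
  "viable_prob P R m i =
     (\<integral>\<^sup>+ xs. (if viable_event i m xs then ennreal (path_weight P R i xs) else 0) \<partial>count_space UNIV)"

definition viable :: "('a \<Rightarrow> 'a \<Rightarrow> real) \<Rightarrow> ('a \<Rightarrow> nat \<Rightarrow> real) \<Rightarrow> int \<Rightarrow> 'a \<Rightarrow> bool" where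
  "viable P R m i \<longleftrightarrow> viable_prob P R m i > 0"

end

theory Submission
  imports Defs
begin

text \<open>Choose in each environment k a value n k charged by R k such that
  \<open>\<Sum>k. \<pi> k * n k > 1\<close>; this is possible because \<open>\<mu> > 1\<close> and the mean of R k never exceeds the
  supremum of its support. With w k = n k - 1 we get \<open>\<Sum>k. \<pi> k * w k > 0\<close>, and then some
  excursion of the environment chain from i back to i has positive total w-weight: otherwise the
  largest weight of a path from i to k that never returns to i is a potential g with
  g j + w k \<le> g k along every transition of positive probability, and averaging this against
  the stationary law (\<open>\<pi> P = \<pi>\<close>) yields \<open>\<Sum>k. \<pi> k * w k \<le> 0\<close>. Driving the walk along that
  excursion with \<open>\<xi>\<^sub>t = n Q\<^sub>t\<close> raises it by at least 1, and started at
  m = 1 + (length of the excursion) it cannot drop below 1, since it loses at most 1 per step.\<close>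

lemma prob_dist_nat_ex_pos:
  assumes "prob_dist_nat r"
  shows "\<exists>m. 0 < r m"
proof (rule ccontr)
  assume "\<nexists>m. 0 < r m"
  with assms have "r = (\<lambda>_. 0)"
    unfolding prob_dist_nat_def by (meson not_less order.antisym)
  with assms have "(\<lambda>_. 0::real) sums 1" by (simp add: prob_dist_nat_def)
  from sums_unique2[OF sums_zero this] show False by simp
qed

lemma mean_nat_le_of_support_le:
  assumes r: "prob_dist_nat r" and le: "\<And>m. 0 < r m \<Longrightarrow> real m \<le> x"
  shows "mean_nat r \<le> ennreal x"
proof -
  have r_nonneg: "0 \<le> r m" for m using r by (simp add: prob_dist_nat_def)
  have r_sums: "r sums 1" using r by (simp add: prob_dist_nat_def)
  have "mean_nat r \<le> (\<Sum>m. ennreal x * ennreal (r m))"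
    unfolding mean_nat_def
  proof (intro suminf_le summableI)
    fix m
    show "ennreal (real m * r m) \<le> ennreal x * ennreal (r m)"
    proof (cases "r m = 0")
      case False
      with r_nonneg[of m] le[of m] have "real m * r m \<le> x * r m"
        by (intro mult_right_mono) auto
      then have "ennreal (real m * r m) \<le> ennreal (x * r m)" by (rule ennreal_leI)
      also have "\<dots> = ennreal x * ennreal (r m)" by (rule ennreal_mult''[OF r_nonneg])
      finally show ?thesis .
    qed simp
  qed
  also have "\<dots> = ennreal x * ennreal (\<Sum>m. r m)"
    by (simp add: suminf_ennreal2[OF r_nonneg sums_summable[OF r_sums]])
  also have "\<dots> = ennreal x"
    using r_sums by (simp add: sums_iff)
  finally show ?thesis .
qed

lemma prob_dist_nat_ex_support_ge:
  assumes r: "prob_dist_nat r" and "ennreal x \<le> mean_nat r"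
  shows "\<exists>m. 0 < r m \<and> x \<le> real m"
proof (rule ccontr)
  assume "\<not> ?thesis"
  then have below: "real m < x" if "0 < r m" for m using that by force
  define S where "S = {m. 0 < r m}"
  have "S \<subseteq> {..nat \<lceil>x\<rceil>}"
  proof
    fix m assume "m \<in> S"
    with below have "real m < x" by (simp add: S_def)
    then have "m \<le> nat \<lceil>x\<rceil>" by linarith
    then show "m \<in> {..nat \<lceil>x\<rceil>}" by simp
  qed
  then have "finite S" by (rule finite_subset) simp
  moreover have "S \<noteq> {}" using prob_dist_nat_ex_pos[OF r] by (simp add: S_def)
  ultimately have "Max S \<in> S" "\<And>m. m \<in> S \<Longrightarrow> m \<le> Max S" by (auto intro: Max_in Max_ge)
  then have "mean_nat r \<le> ennreal (real (Max S))"
    by (intro mean_nat_le_of_support_le[OF r]) (auto simp: S_def)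
  also have "\<dots> < ennreal x"
  proof -
    have "real (Max S) < x" using below \<open>Max S \<in> S\<close> unfolding S_def by blast
    moreover have "0 \<le> real (Max S)" by simp
    ultimately show ?thesis by (intro ennreal_lessI) linarith+
  qed
  finally show False using assms(2) by simp
qed

lemma ex_support_points_weighted_sum_gt:
  fixes \<pi> :: "'a::finite \<Rightarrow> real" and R :: "'a \<Rightarrow> nat \<Rightarrow> real"
  assumes R: "\<And>k. prob_dist_nat (R k)" and \<pi>: "\<And>k. 0 \<le> \<pi> k"
    and mean: "ennreal c < (\<Sum>k\<in>UNIV. ennreal (\<pi> k) * mean_nat (R k))"
  obtains n where "\<And>k. 0 < R k (n k)" "c < (\<Sum>k\<in>UNIV. \<pi> k * real (n k))"
proof -
  have pick: "\<exists>n. \<forall>k. 0 < R k (n k) \<and> x k \<le> real (n k)"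
    if "\<And>k. ennreal (x k) \<le> mean_nat (R k)" for x
    by (intro choice allI prob_dist_nat_ex_support_ge[OF R that])
  consider k0 where "0 < \<pi> k0" "mean_nat (R k0) = top"
    | "\<And>k. 0 < \<pi> k \<Longrightarrow> mean_nat (R k) < top"
    by (metis less_top)
  then show thesis
  proof cases
    case 1
    define x where "x k = (if k = k0 then c / \<pi> k0 + 1 else 0)" for k
    have "ennreal (x k) \<le> mean_nat (R k)" for k
      by (simp add: x_def 1)
    then obtain n where n: "\<And>k. 0 < R k (n k)" "\<And>k. x k \<le> real (n k)"
      using pick by blast
    have "c < \<pi> k0 * x k0" using 1 by (simp add: x_def field_simps)
    also have "\<dots> \<le> \<pi> k0 * real (n k0)" using n(2) \<pi> by (rule mult_left_mono)
    also have "\<dots> \<le> (\<Sum>k\<in>UNIV. \<pi> k * real (n k))" by (rule member_le_sum) (simp_all add: \<pi>)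
    finally show thesis using that n(1) by blast
  next
    case 2
    define x where "x k = enn2real (mean_nat (R k))" for k
    have "ennreal (x k) \<le> mean_nat (R k)" for k
      by (simp add: x_def ennreal_enn2real_if)
    then obtain n where n: "\<And>k. 0 < R k (n k)" "\<And>k. x k \<le> real (n k)"
      using pick by blast
    have weighted_mean: "ennreal (\<pi> k) * mean_nat (R k) = ennreal (\<pi> k * x k)" for k
    proof (cases "\<pi> k = 0")
      case False
      with 2[of k] \<pi>[of k] have "mean_nat (R k) = ennreal (x k)" by (simp add: x_def)
      then show ?thesis by (simp add: ennreal_mult'[OF \<pi>])
    qed simp
    have x_nonneg: "0 \<le> \<pi> k * x k" for k by (simp add: \<pi> x_def)
    have "ennreal c < ennreal (\<Sum>k\<in>UNIV. \<pi> k * x k)"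
      using mean by (simp only: weighted_mean sum_ennreal[OF x_nonneg])
    moreover have "0 \<le> (\<Sum>k\<in>UNIV. \<pi> k * x k)" by (intro sum_nonneg x_nonneg)
    ultimately have "c < (\<Sum>k\<in>UNIV. \<pi> k * x k)"
      by (cases "0 \<le> c") (auto simp: ennreal_less_iff)
    also have "\<dots> \<le> (\<Sum>k\<in>UNIV. \<pi> k * real (n k))"
      using n(2) \<pi> by (intro sum_mono mult_left_mono)
    finally show thesis using that n(1) by blast
  qed
qed

fun pos_path :: "('a \<Rightarrow> 'a \<Rightarrow> real) \<Rightarrow> 'a \<Rightarrow> 'a list \<Rightarrow> bool" where
  "pos_path P a [] = True"
| "pos_path P a (s # ss) = (0 < P a s \<and> pos_path P s ss)"

lemma pos_path_append:
  "pos_path P a (ss @ tt) \<longleftrightarrow> pos_path P a ss \<and> pos_path P (last (a # ss)) tt"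
  by (induction ss arbitrary: a) auto

definition first_passage_path :: "('a \<Rightarrow> 'a \<Rightarrow> real) \<Rightarrow> 'a \<Rightarrow> 'a \<Rightarrow> 'a list \<Rightarrow> bool" where
  "first_passage_path P a b ss \<longleftrightarrow>
     pos_path P a ss \<and> ss \<noteq> [] \<and> last ss = b \<and> b \<notin> set (butlast ss)"

lemma first_passage_path_append:
  assumes "pos_path P a ss" "b \<notin> set ss" "first_passage_path P (last (a # ss)) b tt"
  shows "first_passage_path P a b (ss @ tt)"
  using assms by (auto simp: first_passage_path_def pos_path_append butlast_append)

lemma trancl_imp_first_passage_path:
  assumes "(a, b) \<in> {(x, y). 0 < P x y}\<^sup>+"
  shows "\<exists>ss. first_passage_path P a b ss"
  using assms
proof (induction rule: converse_trancl_induct)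
  case (base a)
  then show ?case by (auto simp: first_passage_path_def intro!: exI[of _ "[b]"])
next
  case (step a c)
  then obtain ss where ss: "first_passage_path P c b ss" by blast
  show ?case
  proof (cases "c = b")
    case True
    with step show ?thesis by (auto simp: first_passage_path_def intro!: exI[of _ "[b]"])
  next
    case False
    with step ss show ?thesis by (auto simp: first_passage_path_def intro!: exI[of _ "c # ss"])
  qed
qed

lemma rtrancl_imp_path_avoiding_source:
  assumes "(a, b) \<in> {(x, y). 0 < P x y}\<^sup>*"
  shows "\<exists>ss. pos_path P a ss \<and> last (a # ss) = b \<and> a \<notin> set ss"
  using assms
proof (induction rule: rtrancl_induct)
  case base
  show ?case by (auto intro!: exI[of _ "[]"])
next
  case (step c d)
  then obtain ss where ss: "pos_path P a ss" "last (a # ss) = c" "a \<notin> set ss" by blast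
  show ?case
  proof (cases "d = a")
    case False
    with step ss show ?thesis by (auto simp: pos_path_append intro!: exI[of _ "ss @ [d]"])
  qed (auto intro!: exI[of _ "[]"])
qed

lemma potential_of_nonpos_excursions:
  fixes P :: "'a::finite \<Rightarrow> 'a \<Rightarrow> real" and w :: "'a \<Rightarrow> real"
  assumes irr: "irreducible_matrix P"
    and nonpos: "\<And>ss. first_passage_path P i i ss \<Longrightarrow> sum_list (map w ss) \<le> 0"
  obtains g where "\<And>j k. 0 < P j k \<Longrightarrow> g j + w k \<le> g k"
proof -
  define B where "B j = {ss. pos_path P i ss \<and> last (i # ss) = j \<and> i \<notin> set ss}" for j
  define g where "g j = Sup ((\<lambda>ss. sum_list (map w ss)) ` B j)" for j
  have reach: "(a, b) \<in> {(x, y). 0 < P x y}\<^sup>+" for a b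
    using irr by (simp add: irreducible_matrix_def)
  have B_ne: "B j \<noteq> {}" for j
  proof -
    obtain ss where "pos_path P i ss" "last (i # ss) = j" "i \<notin> set ss"
      using rtrancl_imp_path_avoiding_source[OF trancl_into_rtrancl[OF reach]] by blast
    then show ?thesis unfolding B_def by blast
  qed
  have excursion: "first_passage_path P i i (ss @ tt)"
    if "ss \<in> B j" "first_passage_path P j i tt" for ss tt j
    using that first_passage_path_append[of P i ss i tt] unfolding B_def by blast
  have bdd: "bdd_above ((\<lambda>ss. sum_list (map w ss)) ` B j)" for j
  proof -
    obtain tt where tt: "first_passage_path P j i tt"
      using trancl_imp_first_passage_path[OF reach] by blast
    have "sum_list (map w ss) \<le> - sum_list (map w tt)" if "ss \<in> B j" for ss
      using nonpos[OF excursion[OF that tt]] by simp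
    then show ?thesis by (intro bdd_aboveI2)
  qed
  have "g j + w k \<le> g k" if "0 < P j k" for j k
  proof -
    have "sum_list (map w ss) + w k \<le> g k" if "ss \<in> B j" for ss
    proof (cases "k = i")
      case True
      have "first_passage_path P j i [k]"
        using \<open>0 < P j k\<close> True by (simp add: first_passage_path_def)
      then have "sum_list (map w ss) + w k \<le> 0"
        using nonpos excursion[OF \<open>ss \<in> B j\<close>] by fastforce
      also have "0 \<le> g k"
      proof -
        have "[] \<in> B k" using True by (simp add: B_def)
        from cSup_upper[OF imageI[OF this] bdd] show ?thesis by (simp add: g_def)
      qed
      finally show ?thesis .
    next
      case False
      with that \<open>0 < P j k\<close> have "ss @ [k] \<in> B k" by (auto simp: B_def pos_path_append)
      then show ?thesis
        unfolding g_def by (rule cSup_upper2[OF imageI _ bdd]) simp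
    qed
    then have "g j \<le> g k - w k"
      unfolding g_def[of j] using B_ne by (intro cSup_least) (auto simp: field_simps)
    then show ?thesis by simp
  qed
  then show thesis by (rule that)
qed

lemma stationary_weight_nonpos_of_potential:
  fixes P :: "'a::finite \<Rightarrow> 'a \<Rightarrow> real"
  assumes sto: "stochastic_matrix P" and sta: "stationary_distribution P \<pi>"
    and pot: "\<And>j k. 0 < P j k \<Longrightarrow> g j + w k \<le> g k"
  shows "(\<Sum>k\<in>UNIV. \<pi> k * w k) \<le> 0"
proof -
  have P_nonneg: "0 \<le> P j k" and P_rows: "(\<Sum>k\<in>UNIV. P j k) = 1" for j k
    using sto by (auto simp: stochastic_matrix_def)
  have \<pi>_nonneg: "0 \<le> \<pi> j" and \<pi>_stat: "(\<Sum>j\<in>UNIV. \<pi> j * P j k) = \<pi> k" for j k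
    using sta by (auto simp: stationary_distribution_def)
  have stat_avg: "(\<Sum>j\<in>UNIV. \<Sum>k\<in>UNIV. \<pi> j * P j k * f k) = (\<Sum>k\<in>UNIV. \<pi> k * f k)" for f
  proof -
    have "(\<Sum>j\<in>UNIV. \<Sum>k\<in>UNIV. \<pi> j * P j k * f k) = (\<Sum>k\<in>UNIV. \<Sum>j\<in>UNIV. \<pi> j * P j k * f k)"
      by (rule sum.swap)
    also have "\<dots> = (\<Sum>k\<in>UNIV. (\<Sum>j\<in>UNIV. \<pi> j * P j k) * f k)"
      by (simp add: sum_distrib_right)
    finally show ?thesis by (simp add: \<pi>_stat)
  qed
  have row_avg: "(\<Sum>k\<in>UNIV. \<pi> j * P j k * c) = \<pi> j * c" for j c
  proof -
    have "(\<Sum>k\<in>UNIV. \<pi> j * P j k * c) = \<pi> j * c * (\<Sum>k\<in>UNIV. P j k)"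
      by (simp add: sum_distrib_left mult_ac)
    then show ?thesis by (simp add: P_rows)
  qed
  have step: "\<pi> j * P j k * w k \<le> \<pi> j * P j k * g k - \<pi> j * P j k * g j" for j k
  proof (cases "P j k = 0")
    case False
    then have "w k \<le> g k - g j" using pot[of j k] P_nonneg[of j k] by simp
    then have "\<pi> j * P j k * w k \<le> \<pi> j * P j k * (g k - g j)"
      using P_nonneg[of j k] \<pi>_nonneg[of j] by (intro mult_left_mono) auto
    then show ?thesis by (simp add: right_diff_distrib)
  qed simp
  have "(\<Sum>k\<in>UNIV. \<pi> k * w k) = (\<Sum>j\<in>UNIV. \<Sum>k\<in>UNIV. \<pi> j * P j k * w k)"
    by (rule stat_avg[symmetric])
  also have "\<dots> \<le> (\<Sum>j\<in>UNIV. \<Sum>k\<in>UNIV. \<pi> j * P j k * g k - \<pi> j * P j k * g j)"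
    by (intro sum_mono step)
  also have "\<dots> = (\<Sum>k\<in>UNIV. \<pi> k * g k) - (\<Sum>j\<in>UNIV. \<pi> j * g j)"
    by (simp add: sum_subtractf stat_avg row_avg)
  finally show ?thesis by simp
qed

lemma ex_positive_excursion:
  fixes P :: "'a::finite \<Rightarrow> 'a \<Rightarrow> real" and w :: "'a \<Rightarrow> real"
  assumes "stochastic_matrix P" "irreducible_matrix P" "stationary_distribution P \<pi>"
    and "0 < (\<Sum>k\<in>UNIV. \<pi> k * w k)"
  obtains ss where "first_passage_path P i i ss" "0 < sum_list (map w ss)"
proof -
  have "\<not> (\<forall>ss. first_passage_path P i i ss \<longrightarrow> sum_list (map w ss) \<le> 0)"
  proof
    assume "\<forall>ss. first_passage_path P i i ss \<longrightarrow> sum_list (map w ss) \<le> 0"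
    then obtain g where "\<And>j k. 0 < P j k \<Longrightarrow> g j + w k \<le> g k"
      using potential_of_nonpos_excursions[OF assms(2)] by blast
    then have "(\<Sum>k\<in>UNIV. \<pi> k * w k) \<le> 0"
      by (rule stationary_weight_nonpos_of_potential[OF assms(1,3)])
    with assms(4) show False by simp
  qed
  then show thesis using that by force
qed

lemma path_weight_pos:
  assumes "pos_path P a ss" "\<And>s. s \<in> set ss \<Longrightarrow> 0 < R s (n s)"
  shows "0 < path_weight P R a (map (\<lambda>s. (s, n s)) ss)"
  using assms by (induction ss arbitrary: a) auto

lemma nn_integral_count_space_pos:
  fixes f :: "'b \<Rightarrow> ennreal"
  assumes "0 < f x"
  shows "0 < (\<integral>\<^sup>+ y. f y \<partial>count_space UNIV)"
proof -
  have "f x = (\<integral>\<^sup>+ y. f y * indicator {x} y \<partial>count_space UNIV)" by simp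
  also have "\<dots> \<le> (\<integral>\<^sup>+ y. f y \<partial>count_space UNIV)"
    by (intro nn_integral_mono) (auto simp: indicator_def)
  finally show ?thesis using assms by simp
qed

lemma viable_of_positive_excursion:
  assumes exc: "first_passage_path P i i ss"
    and charged: "\<And>s. s \<in> set ss \<Longrightarrow> 0 < R s (n s)"
    and gain: "0 < (\<Sum>s\<leftarrow>ss. real (n s) - 1)"
    and start: "int (length ss) < m"
  shows "viable P R m i"
proof -
  define xs where "xs = map (\<lambda>s. (s, n s)) ss"
  have walk: "walk m xs t = m + (\<Sum>u<t. int (n (ss ! u)) - 1)" if "t \<le> length ss" for t
    unfolding walk_def xs_def using that by (intro arg_cong[where f="(+) m"] sum.cong) auto
  have "viable_event i m xs"
    unfolding viable_event_def
  proof (intro conjI allI impI)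
    show "xs \<noteq> []" "fst (last xs) = i"
      using exc by (auto simp: xs_def first_passage_path_def last_map)
  next
    fix j assume j: "j < length xs - 1"
    then have "ss ! j \<in> set (butlast ss)"
      by (metis length_butlast length_map nth_butlast nth_mem xs_def)
    with exc j show "fst (xs ! j) \<noteq> i" by (auto simp: xs_def first_passage_path_def)
  next
    fix t assume "t \<le> length xs"
    moreover have "(\<Sum>u<t. (-1::int)) \<le> (\<Sum>u<t. int (n (ss ! u)) - 1)"
      by (intro sum_mono) simp
    ultimately show "1 \<le> walk m xs t" using walk[of t] start by (simp add: xs_def)
  next
    have "real_of_int (\<Sum>u<length ss. int (n (ss ! u)) - 1) = (\<Sum>s\<leftarrow>ss. real (n s) - 1)"
      by (simp add: sum_list_sum_nth atLeast0LessThan)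
    with gain have "0 < (\<Sum>u<length ss. int (n (ss ! u)) - 1)" by (metis of_int_0_less_iff)
    then show "1 \<le> walk m xs (length xs) - walk m xs 0"
      using walk[of "length ss"] walk[of 0] by (simp add: xs_def)
  qed
  moreover have "0 < path_weight P R i xs"
    using exc charged by (simp add: xs_def first_passage_path_def path_weight_pos)
  ultimately have "0 < viable_prob P R m i"
    unfolding viable_prob_def by (intro nn_integral_count_space_pos[of _ xs]) simp
  then show ?thesis by (simp add: viable_def)
qed

theorem mainTheorem4:
  fixes P :: "'a::finite \<Rightarrow> 'a \<Rightarrow> real"
    and \<pi> :: "'a \<Rightarrow> real"
    and R :: "'a \<Rightarrow> nat \<Rightarrow> real"
  assumes "stochastic_matrix P"
    and "irreducible_matrix P"
    and "stationary_distribution P \<pi>"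
    and "\<forall>i. prob_dist_nat (R i)"
    and "(\<Sum>i\<in>UNIV. ennreal (\<pi> i) * mean_nat (R i)) > 1"
  shows "\<forall>i. \<exists>m::int. m \<ge> 1 \<and> viable P R m i"
proof
  fix i
  have \<pi>_nonneg: "0 \<le> \<pi> k" and \<pi>_total: "(\<Sum>k\<in>UNIV. \<pi> k) = 1" for k
    using assms(3) by (auto simp: stationary_distribution_def)
  obtain n where charged: "\<And>k. 0 < R k (n k)" and "1 < (\<Sum>k\<in>UNIV. \<pi> k * real (n k))"
    using ex_support_points_weighted_sum_gt[of R \<pi> 1] assms(4,5) \<pi>_nonneg by auto
  then have "0 < (\<Sum>k\<in>UNIV. \<pi> k * (real (n k) - 1))"
    by (simp add: right_diff_distrib sum_subtractf \<pi>_total)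
  then obtain ss where "first_passage_path P i i ss" "0 < (\<Sum>s\<leftarrow>ss. real (n s) - 1)"
    using ex_positive_excursion[OF assms(1-3), where w = "\<lambda>k. real (n k) - 1"] by blast
  then have "viable P R (1 + int (length ss)) i"
    using charged by (intro viable_of_positive_excursion) auto
  then show "\<exists>m::int. m \<ge> 1 \<and> viable P R m i" by (intro exI[of _ "1 + int (length ss)"]) simp
qed

end
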